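(* Let $C_\varphi$ be a bounded composition operator on $\mathcal F(\mathbb C^d)$. Let $p\ge2$ and $\lambda\in\mathbb D^p$ with $\lambda_{p-1}=\lambda_p$. Suppose $L_1,\dots,L_p\in\mathcal F(\mathbb C^d)$ are polynomials with $C_\varphi L_i=\lambda_iL_i$ for $i=1,\dots,p-1$ and $C_\varphi L_p=\lambda_{p-1}L_p+L_{p-1}$. Then there is $J\in\mathbb N$ such that for all $j\ge J$, all $n\in\mathbb N$ and all $D\subset\{\alpha\in\mathbb N^p:|\alpha|=n\}$, $$C_\varphi^j\Big(\sum_{\alpha\in D}L^\alpha\Big)=\sum_{\alpha\in\mathbb N^p,\,|\alpha|=n}c(\alpha,D,j)L^\alpha$$ for some complex numbers $c(\alpha,D,j)$ with $|c(\alpha,D,j)|\le1$.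
   Context: $\mathcal F(\mathbb C^d)$ is the Fock space of entire functions with $\|f\|^2=(2\pi)^{-d}\int_{\mathbb C^d}|f|^2e^{-|z|^2/2}dA<\infty$; $C_\varphi f=f\circ\varphi$, bounded iff $\varphi(z)=Az+b$, $\|A\|\le1$, $\langle Av,b\rangle=0$ whenever $|Av|=|v|$. $\mathbb D$ is the open unit disc. For $\alpha\in\mathbb N^p$, $|\alpha|=\sum\alpha_i$ and $L^\alpha=\prod_{i=1}^pL_i^{\alpha_i}$. *)

theory Defs
  imports "HOL-Analysis.Analysis"
begin

text \<open>Points of C^d are vectors of type complex^'n, with d = CARD('n).
  Entire functions on C^d: complex (Frechet) differentiable everywhere,
  i.e. the real derivative is complex linear.\<close>

definition cd_entire :: "(complex^'n \<Rightarrow> complex) \<Rightarrow> bool" where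
  "cd_entire f \<longleftrightarrow> (\<forall>z. \<exists>D. (f has_derivative D) (at z) \<and>
      (\<forall>(c::complex) x. D (\<chi> i. c * x $ i) = c * D x))"

definition fock_space :: "(complex^'n \<Rightarrow> complex) set" where
  "fock_space = {f. cd_entire f \<and>
      integrable lborel (\<lambda>z::complex^'n. (cmod (f z))\<^sup>2 * exp (- (norm z)\<^sup>2 / 2))}"

definition fock_norm :: "(complex^'n \<Rightarrow> complex) \<Rightarrow> real" where
  "fock_norm f = sqrt ((2 * pi) powr (- real CARD('n)) *
      (\<integral>z. (cmod (f z))\<^sup>2 * exp (- (norm z)\<^sup>2 / 2) \<partial>lborel))"

definition bounded_comp_op :: "(complex^'n \<Rightarrow> complex^'n) \<Rightarrow> bool" where
  "bounded_comp_op \<phi> \<longleftrightarrow> (\<forall>f\<in>fock_space. f \<circ> \<phi> \<in> fock_space) \<and>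
      (\<exists>M. \<forall>f\<in>fock_space. fock_norm (f \<circ> \<phi>) \<le> M * fock_norm f)"

definition cd_polynomial :: "(complex^'n \<Rightarrow> complex) \<Rightarrow> bool" where
  "cd_polynomial f \<longleftrightarrow> (\<exists>(S::('n \<Rightarrow> nat) set) c. finite S \<and>
      (\<forall>z. f z = (\<Sum>\<alpha>\<in>S. c \<alpha> * (\<Prod>i\<in>UNIV. (z $ i) ^ \<alpha> i))))"

definition multi_idx :: "nat \<Rightarrow> nat \<Rightarrow> (nat \<Rightarrow> nat) set" where
  "multi_idx p n = {\<alpha>. (\<forall>i. i \<notin> {1..p} \<longrightarrow> \<alpha> i = 0) \<and> (\<Sum>i=1..p. \<alpha> i) = n}"

definition Lpow :: "nat \<Rightarrow> (nat \<Rightarrow> 'a \<Rightarrow> complex) \<Rightarrow> (nat \<Rightarrow> nat) \<Rightarrow> 'a \<Rightarrow> complex" where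
  "Lpow p L \<alpha> z = (\<Prod>i=1..p. (L i z) ^ \<alpha> i)"

end

theory Submission
  imports Defs
begin

text \<open>Write \<lambda> for lam (p - 1) = lam p. After j steps, L i \<circ> \<phi>^j = lam i ^ j * L i for i < p
  and L p \<circ> \<phi>^j = \<lambda>^j * L p + j * \<lambda>^(j-1) * L (p - 1). Expanding L^\<alpha> \<circ> \<phi>^j binomially only
  moves exponent from slot p to slot p - 1, so for fixed \<beta> with N = \<beta> (p-1) + \<beta> p the
  coefficient of L^\<beta> is nonzero for at most N + 1 indices \<alpha>, and each is bounded by (2t)^N with
  t = j * |\<lambda>|^(j-1); the factor \<lambda>^(j * \<alpha> (p-1)) supplies the powers of t not provided by the
  binomial terms. Summing over \<alpha> \<in> D gives at most (N + 1) (2t)^N \<le> (4t)^N \<le> 1 once 4t \<le> 1,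
  which holds for all large j because |\<lambda>| < 1.\<close>

definition move_exp :: "'i \<Rightarrow> 'i \<Rightarrow> ('i \<Rightarrow> nat) \<Rightarrow> nat \<Rightarrow> 'i \<Rightarrow> nat" where
  "move_exp u v \<alpha> k = \<alpha>(u := \<alpha> u + \<alpha> v - k, v := k)"

lemma move_exp_at_target [simp]: "move_exp u v \<alpha> k v = k"
  by (simp add: move_exp_def)

lemma move_exp_at_source [simp]: "u \<noteq> v \<Longrightarrow> move_exp u v \<alpha> k u = \<alpha> u + \<alpha> v - k"
  by (simp add: move_exp_def)

lemma move_exp_other [simp]: "i \<noteq> u \<Longrightarrow> i \<noteq> v \<Longrightarrow> move_exp u v \<alpha> k i = \<alpha> i"
  by (simp add: move_exp_def)

lemma inj_on_move_exp: "inj_on (move_exp u v \<alpha>) K"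
  by (rule inj_onI) (metis move_exp_at_target)

lemma prod_power_move_exp:
  fixes x :: "'i \<Rightarrow> 'a::comm_monoid_mult"
  assumes "finite I" "u \<in> I" "v \<in> I" "u \<noteq> v" "k \<le> \<alpha> v"
  shows "(\<Prod>i\<in>I. x i ^ move_exp u v \<alpha> k i)
       = x v ^ k * x u ^ (\<alpha> v - k) * (\<Prod>i\<in>I - {v}. x i ^ \<alpha> i)"
proof -
  have I: "I = insert v (insert u (I - {u, v}))" "I - {v} = insert u (I - {u, v})"
    using assms by auto
  have "(\<Prod>i\<in>I - {u, v}. x i ^ move_exp u v \<alpha> k i) = (\<Prod>i\<in>I - {u, v}. x i ^ \<alpha> i)"
    by (intro prod.cong) auto
  moreover have "x u ^ (\<alpha> u + \<alpha> v - k) = x u ^ (\<alpha> v - k) * x u ^ \<alpha> u"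
    using assms(5) by (simp flip: power_add add: add.commute)
  ultimately show ?thesis using assms
    by (subst (1 2) I) (simp add: mult_ac)
qed

lemma prod_power_jordan_expand:
  fixes A x \<mu> :: "'i \<Rightarrow> 'a::comm_semiring_1"
  assumes I: "finite I" "u \<in> I" "v \<in> I" "u \<noteq> v"
    and A: "\<forall>i\<in>I - {v}. A i = \<mu> i * x i" "A v = a * x v + b * x u"
  shows "(\<Prod>i\<in>I. A i ^ \<alpha> i) = (\<Sum>k\<le>\<alpha> v. of_nat (\<alpha> v choose k) * a ^ k * b ^ (\<alpha> v - k)
           * (\<Prod>i\<in>I - {v}. \<mu> i ^ \<alpha> i) * (\<Prod>i\<in>I. x i ^ move_exp u v \<alpha> k i))"
proof -
  have "(\<Prod>i\<in>I. A i ^ \<alpha> i) = A v ^ \<alpha> v * (\<Prod>i\<in>I - {v}. (\<mu> i * x i) ^ \<alpha> i)"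
    using A(1) by (simp add: prod.remove[OF I(1,3)])
  also have "A v ^ \<alpha> v = (\<Sum>k\<le>\<alpha> v. of_nat (\<alpha> v choose k) * (a * x v) ^ k * (b * x u) ^ (\<alpha> v - k))"
    unfolding A(2) by (rule binomial_ring)
  also have "\<dots> * (\<Prod>i\<in>I - {v}. (\<mu> i * x i) ^ \<alpha> i) = (\<Sum>k\<le>\<alpha> v. of_nat (\<alpha> v choose k) * a ^ k * b ^ (\<alpha> v - k)
           * (\<Prod>i\<in>I - {v}. \<mu> i ^ \<alpha> i) * (\<Prod>i\<in>I. x i ^ move_exp u v \<alpha> k i))"
    unfolding sum_distrib_right
    by (intro sum.cong) (simp_all add: prod_power_move_exp I power_mult_distrib prod.distrib mult_ac)
  finally show ?thesis .
qed

definition jordan_coeff ::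
    "'i set \<Rightarrow> 'i \<Rightarrow> 'i \<Rightarrow> ('i \<Rightarrow> 'a) \<Rightarrow> 'a \<Rightarrow> 'a \<Rightarrow> ('i \<Rightarrow> nat) \<Rightarrow> ('i \<Rightarrow> nat) \<Rightarrow> 'a::comm_semiring_1" where
  "jordan_coeff I u v \<mu> a b \<alpha> \<beta> = (if \<beta> \<in> move_exp u v \<alpha> ` {..\<alpha> v}
     then of_nat (\<alpha> v choose \<beta> v) * a ^ \<beta> v * b ^ (\<alpha> v - \<beta> v) * (\<Prod>i\<in>I - {v}. \<mu> i ^ \<alpha> i)
     else 0)"

lemma prod_power_jordan_expand_sum:
  fixes A x \<mu> :: "'i \<Rightarrow> 'a::comm_semiring_1"
  assumes I: "finite I" "u \<in> I" "v \<in> I" "u \<noteq> v"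
    and A: "\<forall>i\<in>I - {v}. A i = \<mu> i * x i" "A v = a * x v + b * x u"
    and M: "finite M" "move_exp u v \<alpha> ` {..\<alpha> v} \<subseteq> M"
  shows "(\<Prod>i\<in>I. A i ^ \<alpha> i) = (\<Sum>\<beta>\<in>M. jordan_coeff I u v \<mu> a b \<alpha> \<beta> * (\<Prod>i\<in>I. x i ^ \<beta> i))"
proof -
  have "(\<Sum>\<beta>\<in>M. jordan_coeff I u v \<mu> a b \<alpha> \<beta> * (\<Prod>i\<in>I. x i ^ \<beta> i))
      = (\<Sum>\<beta>\<in>move_exp u v \<alpha> ` {..\<alpha> v}. jordan_coeff I u v \<mu> a b \<alpha> \<beta> * (\<Prod>i\<in>I. x i ^ \<beta> i))"
    using M by (intro sum.mono_neutral_right) (auto simp: jordan_coeff_def)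
  also have "\<dots> = (\<Sum>k\<le>\<alpha> v. jordan_coeff I u v \<mu> a b \<alpha> (move_exp u v \<alpha> k) * (\<Prod>i\<in>I. x i ^ move_exp u v \<alpha> k i))"
    by (rule sum.reindex[OF inj_on_move_exp, unfolded comp_def])
  also have "\<dots> = (\<Prod>i\<in>I. A i ^ \<alpha> i)"
    unfolding prod_power_jordan_expand[OF I A] by (intro sum.cong) (auto simp: jordan_coeff_def)
  finally show ?thesis ..
qed

lemma norm_jordan_coeff_le:
  fixes \<mu> :: "'i \<Rightarrow> 'a::real_normed_field"
  assumes I: "finite I" "u \<in> I" "v \<in> I" "u \<noteq> v" and t: "t \<ge> 0"
    and \<mu>: "\<forall>i\<in>I - {u, v}. norm (\<mu> i) \<le> 1" "norm (\<mu> u) \<le> t"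
    and ab: "norm a \<le> t" "norm b \<le> t"
  shows "norm (jordan_coeff I u v \<mu> a b \<alpha> \<beta>) \<le> (2 * t) ^ (\<beta> u + \<beta> v)"
proof (cases "\<beta> \<in> move_exp u v \<alpha> ` {..\<alpha> v}")
  case True
  then obtain k where k: "k \<le> \<alpha> v" and \<beta>: "\<beta> = move_exp u v \<alpha> k" by auto
  have N: "\<beta> u + \<beta> v = \<alpha> u + \<alpha> v" using k I(4) by (simp add: \<beta>)
  have "(\<Prod>i\<in>I - {v}. norm (\<mu> i) ^ \<alpha> i) = norm (\<mu> u) ^ \<alpha> u * (\<Prod>i\<in>I - {u, v}. norm (\<mu> i) ^ \<alpha> i)"
    using I by (subst prod.remove[of _ u]) (auto simp: insert_commute Diff_insert2[symmetric])
  also have "\<dots> \<le> t ^ \<alpha> u * 1"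
    using \<mu> by (intro mult_mono power_mono prod_le_1) (auto simp: t prod_nonneg power_le_one)
  finally have prod_le: "(\<Prod>i\<in>I - {v}. norm (\<mu> i) ^ \<alpha> i) \<le> t ^ \<alpha> u" by simp
  have "norm (jordan_coeff I u v \<mu> a b \<alpha> \<beta>)
      = real (\<alpha> v choose k) * norm a ^ k * norm b ^ (\<alpha> v - k) * (\<Prod>i\<in>I - {v}. norm (\<mu> i) ^ \<alpha> i)"
    using True by (simp add: jordan_coeff_def \<beta> norm_mult norm_power flip: prod_norm)
  also have "\<dots> \<le> 2 ^ \<alpha> v * t ^ k * t ^ (\<alpha> v - k) * t ^ \<alpha> u"
  proof -
    have "real (\<alpha> v choose k) \<le> 2 ^ \<alpha> v"
      using binomial_le_pow2[of "\<alpha> v" k] by (metis of_nat_le_iff of_nat_numeral of_nat_power)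
    then show ?thesis
      using prod_le ab t by (intro mult_mono power_mono) (auto intro: prod_nonneg)
  qed
  also have "\<dots> \<le> 2 ^ (\<alpha> u + \<alpha> v) * t ^ (\<alpha> u + \<alpha> v)"
    using k t by (simp add: mult.assoc power_add[symmetric] add.commute mult_right_mono)
  finally show ?thesis by (simp add: N power_mult_distrib)
qed (simp add: jordan_coeff_def t)

lemma jordan_coeff_support_subset:
  assumes "u \<noteq> v"
  shows "{\<alpha>. \<beta> \<in> move_exp u v \<alpha> ` {..\<alpha> v}}
           \<subseteq> (\<lambda>s. \<beta>(u := \<beta> u + \<beta> v - s, v := s)) ` {..\<beta> u + \<beta> v}"
proof
  fix \<alpha> assume "\<alpha> \<in> {\<alpha>. \<beta> \<in> move_exp u v \<alpha> ` {..\<alpha> v}}"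
  then obtain k where k: "k \<le> \<alpha> v" "\<beta> = move_exp u v \<alpha> k" by auto
  have "\<alpha> = \<beta>(u := \<beta> u + \<beta> v - \<alpha> v, v := \<alpha> v)"
  proof
    fix i show "\<alpha> i = (\<beta>(u := \<beta> u + \<beta> v - \<alpha> v, v := \<alpha> v)) i"
      using k assms by (cases "i = u"; cases "i = v") simp_all
  qed
  moreover have "\<alpha> v \<le> \<beta> u + \<beta> v" using k assms by simp
  ultimately show "\<alpha> \<in> (\<lambda>s. \<beta>(u := \<beta> u + \<beta> v - s, v := s)) ` {..\<beta> u + \<beta> v}" by blast
qed

lemma sum_norm_jordan_coeff_le_1:
  fixes \<mu> :: "'i \<Rightarrow> 'a::real_normed_field"
  assumes I: "finite I" "u \<in> I" "v \<in> I" "u \<noteq> v" and t: "t \<ge> 0" "4 * t \<le> 1"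
    and \<mu>: "\<forall>i\<in>I - {u, v}. norm (\<mu> i) \<le> 1" "norm (\<mu> u) \<le> t"
    and ab: "norm a \<le> t" "norm b \<le> t" and D: "finite D"
  shows "(\<Sum>\<alpha>\<in>D. norm (jordan_coeff I u v \<mu> a b \<alpha> \<beta>)) \<le> 1"
proof -
  define N where "N = \<beta> u + \<beta> v"
  define S where "S = {\<alpha>. \<beta> \<in> move_exp u v \<alpha> ` {..\<alpha> v}}"
  have "(\<Sum>\<alpha>\<in>D. norm (jordan_coeff I u v \<mu> a b \<alpha> \<beta>)) = (\<Sum>\<alpha>\<in>D \<inter> S. norm (jordan_coeff I u v \<mu> a b \<alpha> \<beta>))"
    using D by (intro sum.mono_neutral_right) (auto simp: S_def jordan_coeff_def)
  also have "\<dots> \<le> real (card (D \<inter> S)) * (2 * t) ^ N"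
    using norm_jordan_coeff_le[OF I t(1) \<mu> ab] by (intro sum_bounded_above) (simp add: N_def)
  also have "\<dots> \<le> 2 ^ N * (2 * t) ^ N"
  proof (rule mult_right_mono)
    have "card (D \<inter> S) \<le> card ((\<lambda>s. \<beta>(u := N - s, v := s)) ` {..N})"
      using jordan_coeff_support_subset[OF I(4), of \<beta>] unfolding S_def N_def
      by (intro card_mono) auto
    also have "\<dots> \<le> N + 1" using card_image_le[of "{..N}"] by simp
    also have "N + 1 \<le> 2 ^ N" using less_exp[of N] by linarith
    finally have "card (D \<inter> S) \<le> (2::nat) ^ N" .
    then show "real (card (D \<inter> S)) \<le> 2 ^ N" by (simp add: numeral_power_le_of_nat_cancel_iff)
  qed (use t in simp)
  also have "\<dots> = (2 * (2 * t)) ^ N" by (rule power_mult_distrib[symmetric])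
  also have "\<dots> \<le> 1" using t by (intro power_le_one) auto
  finally show ?thesis .
qed

lemma sum_move_exp:
  assumes "finite I" "u \<in> I" "v \<in> I" "u \<noteq> v" "k \<le> \<alpha> v"
  shows "(\<Sum>i\<in>I. move_exp u v \<alpha> k i) = (\<Sum>i\<in>I. \<alpha> i)"
proof -
  have I: "I = insert v (insert u (I - {u, v}))" using assms by auto
  have "(\<Sum>i\<in>I - {u, v}. move_exp u v \<alpha> k i) = (\<Sum>i\<in>I - {u, v}. \<alpha> i)"
    by (intro sum.cong) auto
  with assms show ?thesis by (subst (1 2) I) simp
qed

lemma finite_multi_idx: "finite (multi_idx p n)"
proof (rule finite_subset)
  show "multi_idx p n \<subseteq> {\<alpha>. \<forall>i. (i \<in> {1..p} \<longrightarrow> \<alpha> i \<in> {..n}) \<and> (i \<notin> {1..p} \<longrightarrow> \<alpha> i = 0)}"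
    using member_le_sum[of _ "{1..p}"] by (fastforce simp: multi_idx_def)
qed (intro finite_set_of_finite_funs; simp)

lemma move_exp_in_multi_idx:
  assumes "\<alpha> \<in> multi_idx p n" "u \<in> {1..p}" "v \<in> {1..p}" "u \<noteq> v" "k \<le> \<alpha> v"
  shows "move_exp u v \<alpha> k \<in> multi_idx p n"
  using assms sum_move_exp[of "{1..p}" u v k \<alpha>] by (auto simp: multi_idx_def)

lemma sum_Lpow_comp_jordan:
  fixes \<psi> :: "'a \<Rightarrow> 'a" and L :: "nat \<Rightarrow> 'a \<Rightarrow> complex"
  assumes p: "p \<ge> 2" and D: "D \<subseteq> multi_idx p n"
    and eigen: "\<forall>i\<in>{1..p-1}. \<forall>z. L i (\<psi> z) = \<mu> i * L i z"
    and jordan: "\<forall>z. L p (\<psi> z) = a * L p z + b * L (p - 1) z"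
    and t: "t \<ge> 0" "4 * t \<le> 1"
    and \<mu>: "\<forall>i\<in>{1..p-1}. norm (\<mu> i) \<le> 1" "norm (\<mu> (p - 1)) \<le> t"
    and ab: "norm a \<le> t" "norm b \<le> t"
  shows "\<exists>c. (\<forall>\<alpha>\<in>multi_idx p n. norm (c \<alpha>) \<le> 1) \<and>
           (\<forall>z. (\<Sum>\<alpha>\<in>D. Lpow p L \<alpha> (\<psi> z)) = (\<Sum>\<alpha>\<in>multi_idx p n. c \<alpha> * Lpow p L \<alpha> z))"
proof -
  let ?I = "{1..p}" and ?M = "multi_idx p n"
  have I: "finite ?I" "p - 1 \<in> ?I" "p \<in> ?I" "p - 1 \<noteq> p" using p by auto
  have finD: "finite D" using D finite_multi_idx by (rule finite_subset)
  define c where "c \<beta> = (\<Sum>\<alpha>\<in>D. jordan_coeff ?I (p - 1) p \<mu> a b \<alpha> \<beta>)" for \<beta>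
  have "norm (c \<beta>) \<le> 1" for \<beta>
  proof -
    have \<mu>': "\<forall>i\<in>?I - {p - 1, p}. norm (\<mu> i) \<le> 1" using \<mu>(1) by auto
    have "(\<Sum>\<alpha>\<in>D. norm (jordan_coeff ?I (p - 1) p \<mu> a b \<alpha> \<beta>)) \<le> 1"
      by (rule sum_norm_jordan_coeff_le_1[OF I t \<mu>' \<mu>(2) ab finD])
    then show ?thesis unfolding c_def by (rule order_trans[OF norm_sum])
  qed
  moreover have "(\<Sum>\<alpha>\<in>D. Lpow p L \<alpha> (\<psi> z)) = (\<Sum>\<beta>\<in>?M. c \<beta> * Lpow p L \<beta> z)" for z
  proof -
    have "Lpow p L \<alpha> (\<psi> z) = (\<Sum>\<beta>\<in>?M. jordan_coeff ?I (p - 1) p \<mu> a b \<alpha> \<beta> * Lpow p L \<beta> z)"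
      if "\<alpha> \<in> D" for \<alpha>
      unfolding Lpow_def
    proof (rule prod_power_jordan_expand_sum[OF I])
      show "\<forall>i\<in>?I - {p}. L i (\<psi> z) = \<mu> i * L i z" using eigen by auto
      show "move_exp (p - 1) p \<alpha> ` {..\<alpha> p} \<subseteq> ?M"
        using that D I by (auto intro!: move_exp_in_multi_idx)
    qed (simp_all add: jordan finite_multi_idx)
    then have "(\<Sum>\<alpha>\<in>D. Lpow p L \<alpha> (\<psi> z))
        = (\<Sum>\<alpha>\<in>D. \<Sum>\<beta>\<in>?M. jordan_coeff ?I (p - 1) p \<mu> a b \<alpha> \<beta> * Lpow p L \<beta> z)"
      by simp
    also have "\<dots> = (\<Sum>\<beta>\<in>?M. c \<beta> * Lpow p L \<beta> z)"
      unfolding c_def sum_distrib_right by (rule sum.swap)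
    finally show ?thesis .
  qed
  ultimately show ?thesis by blast
qed

lemma funpow_eigen:
  fixes f :: "'a \<Rightarrow> 'b::comm_semiring_1"
  assumes "\<forall>z. f (\<phi> z) = l * f z"
  shows "f ((\<phi> ^^ j) z) = l ^ j * f z"
  by (induction j) (simp_all add: assms mult_ac)

lemma funpow_jordan:
  fixes f g :: "'a \<Rightarrow> 'b::comm_semiring_1"
  assumes eigen: "\<forall>z. g (\<phi> z) = l * g z" and jordan: "\<forall>z. f (\<phi> z) = l * f z + g z"
  shows "f ((\<phi> ^^ j) z) = l ^ j * f z + of_nat j * l ^ (j - 1) * g z"
proof (induction j)
  case (Suc j)
  have "f ((\<phi> ^^ Suc j) z) = l * f ((\<phi> ^^ j) z) + l ^ j * g z"
    using jordan funpow_eigen[OF eigen] by simp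
  also have "\<dots> = l * (l ^ j * f z + of_nat j * l ^ (j - 1) * g z) + l ^ j * g z"
    by (simp only: Suc)
  also have "\<dots> = l ^ Suc j * f z + of_nat (Suc j) * l ^ j * g z"
    by (cases j) (simp_all add: algebra_simps)
  finally show ?case by simp
qed simp

lemma eventually_Suc_mult_power_le:
  fixes r :: real
  assumes "0 \<le> r" "r < 1" "\<epsilon> > 0"
  shows "eventually (\<lambda>m. real (Suc m) * r ^ m \<le> \<epsilon>) sequentially"
proof -
  have "(\<lambda>m. real m * r ^ m + r ^ m) \<longlonglongrightarrow> 0 + 0"
    using assms by (intro tendsto_add powser_times_n_limit_0 LIMSEQ_power_zero) auto
  then have "(\<lambda>m. real (Suc m) * r ^ m) \<longlonglongrightarrow> 0" by (simp add: algebra_simps)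
  then have "eventually (\<lambda>m. real (Suc m) * r ^ m < \<epsilon>) sequentially"
    using assms(3) by (rule order_tendstoD(2))
  then show ?thesis by (rule eventually_mono) simp
qed

lemma sum_Lpow_funpow_jordan:
  fixes \<phi> :: "'a \<Rightarrow> 'a" and L :: "nat \<Rightarrow> 'a \<Rightarrow> complex"
  assumes p: "p \<ge> 2" and D: "D \<subseteq> multi_idx p n"
    and lam: "\<forall>i\<in>{1..p-1}. cmod (lam i) \<le> 1"
    and eigen: "\<forall>i\<in>{1..p-1}. \<forall>z. L i (\<phi> z) = lam i * L i z"
    and jordan: "\<forall>z. L p (\<phi> z) = lam (p - 1) * L p z + L (p - 1) z"
    and small: "4 * (real (Suc m) * cmod (lam (p - 1)) ^ m) \<le> 1"
  shows "\<exists>c. (\<forall>\<alpha>\<in>multi_idx p n. cmod (c \<alpha>) \<le> 1) \<and>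
           (\<forall>z. (\<Sum>\<alpha>\<in>D. Lpow p L \<alpha> ((\<phi> ^^ Suc m) z)) = (\<Sum>\<alpha>\<in>multi_idx p n. c \<alpha> * Lpow p L \<alpha> z))"
proof (rule sum_Lpow_comp_jordan[OF p D, where \<mu> = "\<lambda>i. lam i ^ Suc m"
      and a = "lam (p - 1) ^ Suc m" and b = "of_nat (Suc m) * lam (p - 1) ^ m"
      and t = "real (Suc m) * cmod (lam (p - 1)) ^ m"])
  define r where "r = cmod (lam (p - 1))"
  have r: "0 \<le> r" "r \<le> 1" using lam p by (auto simp: r_def)
  have eigen': "\<forall>z. L (p - 1) (\<phi> z) = lam (p - 1) * L (p - 1) z" using eigen p by simp
  show "\<forall>i\<in>{1..p-1}. \<forall>z. L i ((\<phi> ^^ Suc m) z) = lam i ^ Suc m * L i z"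
    using eigen by (auto intro: funpow_eigen)
  show "\<forall>z. L p ((\<phi> ^^ Suc m) z)
      = lam (p - 1) ^ Suc m * L p z + (of_nat (Suc m) * lam (p - 1) ^ m) * L (p - 1) z"
    using funpow_jordan[OF eigen' jordan] by (simp del: funpow.simps)
  show "\<forall>i\<in>{1..p-1}. cmod (lam i ^ Suc m) \<le> 1"
    using lam by (simp del: power_Suc add: norm_power power_le_one)
  show "4 * (real (Suc m) * cmod (lam (p - 1)) ^ m) \<le> 1" by (rule small)
  have "r ^ Suc m \<le> real (Suc m) * r ^ m"
    unfolding power_Suc using r by (intro mult_right_mono) auto
  then show "cmod (lam (p - 1) ^ Suc m) \<le> real (Suc m) * cmod (lam (p - 1)) ^ m"
    and "cmod (lam (p - 1) ^ Suc m) \<le> real (Suc m) * cmod (lam (p - 1)) ^ m"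
    by (simp_all only: r_def norm_power)
  show "cmod (of_nat (Suc m) * lam (p - 1) ^ m) \<le> real (Suc m) * cmod (lam (p - 1)) ^ m"
    by (simp del: of_nat_Suc add: norm_mult norm_power)
qed simp

theorem mainTheorem7:
  fixes \<phi> :: "complex^'n \<Rightarrow> complex^'n"
    and p :: nat
    and lam :: "nat \<Rightarrow> complex"
    and L :: "nat \<Rightarrow> complex^'n \<Rightarrow> complex"
  assumes bdd: "bounded_comp_op \<phi>"
    and p2: "p \<ge> 2"
    and lam_disc: "\<forall>i\<in>{1..p}. cmod (lam i) < 1"
    and lam_eq: "lam (p - 1) = lam p"
    and L_poly: "\<forall>i\<in>{1..p}. cd_polynomial (L i) \<and> L i \<in> fock_space"
    and L_eig: "\<forall>i\<in>{1..p-1}. \<forall>z. L i (\<phi> z) = lam i * L i z"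
    and L_gen: "\<forall>z. L p (\<phi> z) = lam (p - 1) * L p z + L (p - 1) z"
  shows "\<exists>J::nat. \<forall>j\<ge>J. \<forall>n::nat. \<forall>D. D \<subseteq> multi_idx p n \<longrightarrow>
           (\<exists>c::(nat \<Rightarrow> nat) \<Rightarrow> complex.
              (\<forall>\<alpha>\<in>multi_idx p n. cmod (c \<alpha>) \<le> 1) \<and>
              (\<forall>z. (\<Sum>\<alpha>\<in>D. Lpow p L \<alpha> ((\<phi> ^^ j) z)) =
                   (\<Sum>\<alpha>\<in>multi_idx p n. c \<alpha> * Lpow p L \<alpha> z)))"
proof -
  define r where "r = cmod (lam (p - 1))"
  have r: "0 \<le> r" "r < 1" using lam_disc p2 by (auto simp: r_def)
  obtain J where J: "\<And>m. m \<ge> J \<Longrightarrow> real (Suc m) * r ^ m \<le> 1 / 4"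
    using eventually_Suc_mult_power_le[OF r, of "1 / 4"] by (auto simp: eventually_sequentially)
  have lam: "\<forall>i\<in>{1..p-1}. cmod (lam i) \<le> 1" using lam_disc by (auto intro: less_imp_le)
  show ?thesis
  proof (intro exI[of _ "Suc J"] allI impI)
    fix j n D assume j: "Suc J \<le> j" and D: "D \<subseteq> multi_idx p n"
    then obtain m where m: "j = Suc m" "m \<ge> J" by (cases j) auto
    have "4 * (real (Suc m) * cmod (lam (p - 1)) ^ m) \<le> 1" using J[OF m(2)] by (simp add: r_def)
    from sum_Lpow_funpow_jordan[OF p2 D lam L_eig L_gen this]
    show "\<exists>c. (\<forall>\<alpha>\<in>multi_idx p n. cmod (c \<alpha>) \<le> 1) \<and>
           (\<forall>z. (\<Sum>\<alpha>\<in>D. Lpow p L \<alpha> ((\<phi> ^^ j) z)) = (\<Sum>\<alpha>\<in>multi_idx p n. c \<alpha> * Lpow p L \<alpha> z))"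
      by (simp only: m(1))
  qed
qed

end
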